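(* Let $\delta>0$, let $Z\in\mathbb{R}^{N\times r}$ with $\operatorname{rank}(Z)=r$, and let $Z=U\Lambda V$ be its compact singular value decomposition, where $U\in\mathbb{R}^{N\times r}$ has orthonormal columns, $\Lambda\in\mathbb{R}^{r\times r}$ is diagonal with positive diagonal entries, and $V\in\mathbb{R}^{r\times r}$ is orthogonal. Then the Euclidean gradient of $F_\delta$ at $Z$ is $$\nabla F_\delta(Z)=(I_N-UU^T)\,D_\delta(UV)\,U\Lambda^{-1}V.$$
   Context: The Huber function is $H_\delta(x)=x-\delta/2$ for $x\ge\delta$ and $H_\delta(x)=x^2/(2\delta)$ for $0\le x<\delta$; its derivative is $H_\delta'(x)=1$ for $x\ge\delta$ and $H_\delta'(x)=x/\delta$ for $0\le x<\delta$. For $Z\in\mathbb{R}^{N\times r}$ of rank $r$, $F_\delta(Z)=\sum_{n=1}^N\big[H_\delta(\|(Z(Z^TZ)^{-1/2})[n]\|_2)+\delta/2\big]$, where $(\cdot)[n]$ denotes the $n$-th row. $I_N$ is the $N\times N$ identity matrix. For $W\in\mathbb{R}^{N\times r}$, $D_\delta(W)$ is the $N\times N$ diagonal matrix with $D_\delta(W)_{i,i}=H_\delta'(\|W[i,:]\|_2)/\|W[i,:]\|_2$ if the $i$-th row $W[i,:]$ is non-zero and $D_\delta(W)_{i,i}=0$ otherwise. *)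

theory Defs
  imports "HOL-Analysis.Analysis"
begin

text \<open>Matrices in R^(N x r) are represented as real^'r^'n (row index 'n, column index 'r);
  the n-th row of M is M $ n.\<close>

definition huber :: "real \<Rightarrow> real \<Rightarrow> real" where
  "huber \<delta> x = (if x \<ge> \<delta> then x - \<delta> / 2 else x\<^sup>2 / (2 * \<delta>))"

definition huber_deriv :: "real \<Rightarrow> real \<Rightarrow> real" where
  "huber_deriv \<delta> x = (if x \<ge> \<delta> then 1 else x / \<delta>)"

definition pos_def_matrix :: "real^'r^'r \<Rightarrow> bool" where
  "pos_def_matrix S \<longleftrightarrow> (\<forall>x. x \<noteq> 0 \<longrightarrow> x \<bullet> (S *v x) > 0)"

definition mat_inv_sqrt :: "real^'r^'r \<Rightarrow> real^'r^'r" where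
  "mat_inv_sqrt A = (THE S. transpose S = S \<and> pos_def_matrix S \<and> S ** S = matrix_inv A)"

definition F_huber :: "real \<Rightarrow> real^'r^'n \<Rightarrow> real" where
  "F_huber \<delta> Z = (let W = Z ** mat_inv_sqrt (transpose Z ** Z) in
     (\<Sum>n\<in>UNIV. huber \<delta> (norm (W $ n)) + \<delta> / 2))"

definition D_huber :: "real \<Rightarrow> real^'r^'n \<Rightarrow> real^'n^'n" where
  "D_huber \<delta> W = (\<chi> i j. if i = j \<and> W $ i \<noteq> 0
      then huber_deriv \<delta> (norm (W $ i)) / norm (W $ i) else 0)"

end

(*
  Near Z the Gram matrix X^T X has a symmetric positive definite square root: apply the
  inverse function theorem to R |-> R R at the root V^T Lambda V of Z^T Z; its derivative
  H |-> R H + H R is injective, since a Sylvester equation S X + X T = 0 with positive definite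
  S and T has only the solution X = 0 (take the trace of X^T (S X + X T)). So (X^T X)^(-1/2) is
  the inverse of that root, and the squared row norms of X (X^T X)^(-1/2) are the leverage
  scores l_n(X) = X_n^T (X^T X)^(-1) X_n. Near Z therefore
    F_delta(X) = sum_n psi(l_n(X)) + delta/2,   psi(t) = H_delta(sqrt t),
  with psi differentiable everywhere. Differentiating the inverse Gram matrix gives
    grad F_delta(Z) = (I - P) diag(2 psi'(l_n(Z))) Z (Z^T Z)^(-1),   P = Z (Z^T Z)^(-1) Z^T.
  For Z = U Lambda V one has P = U U^T, Z (Z^T Z)^(-1) = U Lambda^(-1) V and l_n(Z) = |U_n|^2,
  and 2 psi'(|U_n|^2) = H_delta'(|U_n|) / |U_n| is the n-th diagonal entry of D_delta(U V)
  whenever U_n is nonzero.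
*)
theory Submission
  imports Defs
begin

lemma bounded_bilinear_matrix_matrix_mult:
  "bounded_bilinear (\<lambda>(A::real^'m^'n) (B::real^'k^'m). A ** B)"
  unfolding bilinear_conv_bounded_bilinear[symmetric] bilinear_def
  by (auto intro!: linearI simp: vec_eq_iff matrix_matrix_mult_def sum.distrib algebra_simps sum_distrib_left)

lemma bounded_bilinear_matrix_vector_mult:
  "bounded_bilinear (\<lambda>(A::real^'m^'n) (x::real^'m). A *v x)"
  unfolding bilinear_conv_bounded_bilinear[symmetric] bilinear_def
  by (auto intro!: linearI simp: vec_eq_iff matrix_vector_mult_def sum.distrib algebra_simps sum_distrib_left)

lemmas matrix_add_rdistrib = bounded_bilinear.add_left[OF bounded_bilinear_matrix_matrix_mult]
lemmas matrix_diff_ldistrib = bounded_bilinear.diff_right[OF bounded_bilinear_matrix_matrix_mult]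
lemmas matrix_diff_rdistrib = bounded_bilinear.diff_left[OF bounded_bilinear_matrix_matrix_mult]

lemma bounded_linear_transpose: "bounded_linear (transpose :: real^'m^'n \<Rightarrow> real^'n^'m)"
  by (intro linear_conv_bounded_linear[THEN iffD1] linearI) (simp_all add: vec_eq_iff transpose_def)

lemma matrix_matrix_mult_nth: "((A::real^'m^'n) ** (B::real^'k^'m)) $ i = A $ i v* B"
  by (simp add: vec_eq_iff matrix_matrix_mult_def vector_matrix_mult_def)

lemma inner_transpose_matrix_vector: "x \<bullet> (transpose A *v y) = ((A::real^'m^'n) *v x) \<bullet> y"
  by (metis dot_lmul_matrix inner_commute transpose_matrix_vector)

lemma power2_norm_vec: "(norm x)\<^sup>2 = (\<Sum>i\<in>UNIV. (norm (x $ i))\<^sup>2)"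
  by (simp add: norm_vec_def[of x] L2_set_def sum_nonneg)

lemma norm_matrix_vector_mult_le: "norm ((A::real^'m^'n) *v x) \<le> norm A * norm x"
proof (rule power2_le_imp_le)
  have "(norm (A *v x))\<^sup>2 = (\<Sum>i\<in>UNIV. (A $ i \<bullet> x)\<^sup>2)"
    unfolding power2_norm_vec[of "A *v x"] by (simp add: matrix_vector_mult_def inner_vec_def mult.commute)
  also have "\<dots> \<le> (\<Sum>i\<in>UNIV. (norm (A $ i) * norm x)\<^sup>2)"
    by (intro sum_mono) (metis Cauchy_Schwarz_ineq2 abs_ge_zero power2_abs power_mono)
  also have "\<dots> = (norm A * norm x)\<^sup>2"
    by (simp add: power2_norm_vec[of A] power_mult_distrib sum_distrib_right)
  finally show "(norm (A *v x))\<^sup>2 \<le> (norm A * norm x)\<^sup>2" .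
qed (intro mult_nonneg_nonneg norm_ge_zero)

lemma norm_transpose: "norm (transpose (A::real^'m^'n)) = norm A"
proof -
  have "transpose A \<bullet> transpose A = (\<Sum>j\<in>UNIV. \<Sum>i\<in>UNIV. A $ i $ j * A $ i $ j)"
    by (simp add: inner_vec_def transpose_def)
  also have "\<dots> = A \<bullet> A"
    by (subst sum.swap) (simp add: inner_vec_def)
  finally show ?thesis
    by (simp add: norm_eq_sqrt_inner)
qed

lemma norm_matrix_mult_le: "norm ((A::real^'m^'n) ** (B::real^'k^'m)) \<le> norm A * norm B"
proof (rule power2_le_imp_le)
  have "(norm (A ** B))\<^sup>2 = (\<Sum>i\<in>UNIV. (norm (transpose B *v A $ i))\<^sup>2)"
    by (simp only: power2_norm_vec[of "A ** B"] matrix_matrix_mult_nth transpose_matrix_vector)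
  also have "\<dots> \<le> (\<Sum>i\<in>UNIV. (norm (A $ i) * norm B)\<^sup>2)"
    by (intro sum_mono power_mono) (metis norm_matrix_vector_mult_le norm_transpose mult.commute, simp)
  also have "\<dots> = (norm A * norm B)\<^sup>2"
    by (simp add: power2_norm_vec[of A] power_mult_distrib sum_distrib_right)
  finally show "(norm (A ** B))\<^sup>2 \<le> (norm A * norm B)\<^sup>2" .
qed (intro mult_nonneg_nonneg norm_ge_zero)

lemma norm_matrix_mult_bound:
  fixes A :: "real^'m^'n" and B :: "real^'k^'m"
  shows "norm A \<le> a \<Longrightarrow> norm B \<le> b \<Longrightarrow> norm (A ** B) \<le> a * b"
  by (meson norm_matrix_mult_le mult_mono norm_ge_zero order_trans)

lemma norm_vector_matrix_mult_orthogonal: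
  assumes "orthogonal_matrix (V::real^'n^'n)"
  shows "norm (x v* V) = norm x"
proof -
  have "(x v* V) \<bullet> (x v* V) = x \<bullet> ((V ** transpose V) *v x)"
    by (simp add: dot_lmul_matrix matrix_vector_mul_assoc[symmetric])
  also have "\<dots> = x \<bullet> x"
    using assms by (simp add: orthogonal_matrix_def)
  finally show ?thesis
    by (simp add: norm_eq_sqrt_inner)
qed

lemma inner_matrix_eq_trace: "X \<bullet> Y = trace (transpose X ** (Y::real^'m^'n))"
proof -
  have "trace (transpose X ** Y) = (\<Sum>j\<in>UNIV. \<Sum>i\<in>UNIV. X $ i $ j * Y $ i $ j)"
    by (simp add: trace_def matrix_matrix_mult_def transpose_def)
  also have "\<dots> = (\<Sum>i\<in>UNIV. \<Sum>j\<in>UNIV. X $ i $ j * Y $ i $ j)"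
    by (rule sum.swap)
  finally show ?thesis
    by (simp add: inner_vec_def)
qed

lemma inner_matrix_mult_left: "((A::real^'m^'n) ** B) \<bullet> (C::real^'k^'n) = B \<bullet> (transpose A ** C)"
  by (simp only: inner_matrix_eq_trace matrix_transpose_mul matrix_mul_assoc)

lemma quadratic_form_diagonal:
  "(A ** S ** transpose A) $ i $ i = A $ i \<bullet> (S *v A $ i)" for A :: "real^'r^'n"
proof -
  have "(A ** S ** transpose A) $ i $ i = (A ** S) $ i \<bullet> A $ i"
    by (simp add: matrix_matrix_mult_def transpose_def inner_vec_def)
  also have "(A ** S) $ i = A $ i v* S"
    by (rule matrix_matrix_mult_nth)
  finally show ?thesis
    by (simp add: dot_lmul_matrix)
qed

lemma matrix_mul_right_cancel: "B ** C = mat 1 \<Longrightarrow> A ** B ** C = A"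
  by (metis matrix_mul_assoc matrix_mul_rid)

lemma matrix_inv_left: "invertible A \<Longrightarrow> matrix_inv A ** A = mat 1"
  and matrix_inv_right: "invertible A \<Longrightarrow> A ** matrix_inv A = mat 1"
  unfolding invertible_def matrix_inv_def by (metis (mono_tags, lifting) someI_ex)+

lemma matrix_inv_unique:
  fixes A B :: "real^'n^'n"
  assumes "A ** B = mat 1"
  shows "matrix_inv A = B"
proof -
  have "invertible A"
    using assms invertible_right_inverse by blast
  then have "matrix_inv A = matrix_inv A ** (A ** B)"
    by (simp add: assms)
  then show ?thesis
    by (simp add: matrix_mul_assoc matrix_inv_left \<open>invertible A\<close>)
qed

lemma matrix_inv_transpose:
  fixes A :: "real^'n^'n"
  assumes "invertible A"
  shows "matrix_inv (transpose A) = transpose (matrix_inv A)"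
  by (rule matrix_inv_unique) (metis matrix_transpose_mul matrix_inv_left assms transpose_mat)

lemma matrix_inv_square:
  fixes R :: "real^'r^'r"
  assumes "invertible R"
  shows "matrix_inv R ** matrix_inv R = matrix_inv (R ** R)"
proof -
  have "(R ** R) ** (matrix_inv R ** matrix_inv R) = mat 1"
    by (metis assms matrix_inv_right matrix_mul_assoc matrix_mul_lid)
  then show ?thesis
    by (metis matrix_inv_unique)
qed

lemma open_invertible: "open {A :: real^'n^'n. invertible A}"
proof -
  have "continuous_on UNIV (det :: real^'n^'n \<Rightarrow> real)"
    unfolding det_def by (intro continuous_intros)
  then have "open (det -` (- {0}) :: (real^'n^'n) set)"
    by (intro open_vimage) auto
  then show ?thesis
    by (simp add: invertible_det_nz vimage_def)
qed

lemma matrix_inv_diff: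
  fixes A B :: "real^'n^'n"
  assumes "invertible A" "invertible B"
  shows "matrix_inv A - matrix_inv B = matrix_inv A ** (B - A) ** matrix_inv B"
proof -
  have "matrix_inv A ** (B - A) ** matrix_inv B
      = matrix_inv A ** (B ** matrix_inv B) - (matrix_inv A ** A) ** matrix_inv B"
    by (simp add: matrix_diff_ldistrib matrix_diff_rdistrib matrix_mul_assoc)
  then show ?thesis
    by (simp add: matrix_inv_left matrix_inv_right assms)
qed

lemma matrix_inv_bounded_near:
  fixes A :: "real^'n^'n"
  assumes "invertible A"
  obtains d where "d > 0"
    "\<And>B. norm (B - A) < d \<Longrightarrow> invertible B \<and> norm (matrix_inv B) \<le> 2 * norm (matrix_inv A)"
proof -
  define a where "a = norm (matrix_inv A)"
  obtain d0 where "d0 > 0" and d0: "\<And>B. dist B A < d0 \<Longrightarrow> invertible B"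
    using open_invertible assms unfolding open_dist by blast
  have "a \<ge> 0"
    by (simp add: a_def)
  show ?thesis
  proof (rule that[of "min d0 (1 / (2 * (a + 1)))"])
    show "min d0 (1 / (2 * (a + 1))) > 0"
      using \<open>d0 > 0\<close> \<open>a \<ge> 0\<close> by simp
    fix B :: "real^'n^'n"
    assume B: "norm (B - A) < min d0 (1 / (2 * (a + 1)))"
    then have "invertible B"
      using d0 by (simp add: dist_norm)
    have "a * norm (B - A) \<le> (a + 1) * norm (B - A)"
      by (simp add: mult_right_mono)
    also have "\<dots> \<le> 1 / 2"
      using B \<open>a \<ge> 0\<close> by (simp add: field_simps)
    finally have small: "a * norm (B - A) \<le> 1 / 2" .
    have "matrix_inv B = matrix_inv A - matrix_inv A ** (B - A) ** matrix_inv B"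
      by (simp add: matrix_inv_diff[OF assms \<open>invertible B\<close>, symmetric])
    then have "norm (matrix_inv B) \<le> a + norm (matrix_inv A ** (B - A) ** matrix_inv B)"
      by (metis a_def norm_triangle_ineq4)
    also have "\<dots> \<le> a + a * norm (B - A) * norm (matrix_inv B)"
      unfolding a_def by (intro add_left_mono norm_matrix_mult_bound order_refl)
    also have "\<dots> \<le> a + 1 / 2 * norm (matrix_inv B)"
      using small by (intro add_left_mono mult_right_mono) auto
    finally show "invertible B \<and> norm (matrix_inv B) \<le> 2 * norm (matrix_inv A)"
      using \<open>invertible B\<close> by (simp add: a_def)
  qed
qed

lemma has_derivative_at_quadratic_remainder:
  fixes f :: "'a::real_normed_vector \<Rightarrow> 'b::real_normed_vector"
  assumes "bounded_linear f'" and "d > 0"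
    and remainder: "\<And>y. norm (y - x) < d \<Longrightarrow> norm (f y - f x - f' (y - x)) \<le> K * (norm (y - x))\<^sup>2"
  shows "(f has_derivative f') (at x)"
  unfolding has_derivative_at_alt
proof (intro conjI allI impI assms(1))
  fix e :: real
  assume "e > 0"
  show "\<exists>d'>0. \<forall>y. norm (y - x) < d' \<longrightarrow> norm (f y - f x - f' (y - x)) \<le> e * norm (y - x)"
  proof (intro exI[of _ "min d (e / (\<bar>K\<bar> + 1))"] conjI allI impI)
    show "min d (e / (\<bar>K\<bar> + 1)) > 0"
      using \<open>d > 0\<close> \<open>e > 0\<close> by simp
    fix y
    assume y: "norm (y - x) < min d (e / (\<bar>K\<bar> + 1))"
    have "\<bar>K\<bar> * norm (y - x) \<le> (\<bar>K\<bar> + 1) * norm (y - x)"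
      by (simp add: mult_right_mono)
    also have "\<dots> \<le> e"
      using y by (simp add: field_simps)
    finally have "\<bar>K\<bar> * norm (y - x) * norm (y - x) \<le> e * norm (y - x)"
      by (rule mult_right_mono) simp
    moreover have "K * (norm (y - x))\<^sup>2 \<le> \<bar>K\<bar> * norm (y - x) * norm (y - x)"
      by (simp add: power2_eq_square mult.assoc mult_right_mono)
    moreover have "norm (f y - f x - f' (y - x)) \<le> K * (norm (y - x))\<^sup>2"
      using remainder y by simp
    ultimately show "norm (f y - f x - f' (y - x)) \<le> e * norm (y - x)"
      by linarith
  qed
qed

lemma has_derivative_matrix_inv:
  fixes A :: "real^'n^'n"
  assumes "invertible A"
  shows "(matrix_inv has_derivative (\<lambda>E. - (matrix_inv A ** E ** matrix_inv A))) (at A)"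
proof -
  define a where "a = norm (matrix_inv A)"
  obtain d where "d > 0" and near:
    "\<And>B. norm (B - A) < d \<Longrightarrow> invertible B \<and> norm (matrix_inv B) \<le> 2 * a"
    using matrix_inv_bounded_near[OF assms] unfolding a_def by blast
  have "bounded_linear (\<lambda>E. matrix_inv A ** E ** matrix_inv A)"
    using bounded_linear_compose[OF bounded_bilinear.bounded_linear_left bounded_bilinear.bounded_linear_right]
      bounded_bilinear_matrix_matrix_mult by blast
  then have "bounded_linear (\<lambda>E. - (matrix_inv A ** E ** matrix_inv A))"
    by (rule bounded_linear_minus)
  moreover have "norm (matrix_inv B - matrix_inv A - - (matrix_inv A ** (B - A) ** matrix_inv A))
      \<le> 2 * a ^ 3 * (norm (B - A))\<^sup>2" if "norm (B - A) < d" for B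
  proof -
    have "invertible B" and Bi: "norm (matrix_inv B) \<le> 2 * a"
      using near that by auto
    note diff = matrix_inv_diff[OF assms \<open>invertible B\<close>]
    have "matrix_inv B - matrix_inv A - - (matrix_inv A ** (B - A) ** matrix_inv A)
        = matrix_inv A ** (B - A) ** matrix_inv A - matrix_inv A ** (B - A) ** matrix_inv B"
      by (simp add: diff[symmetric])
    also have "\<dots> = matrix_inv A ** (B - A) ** (matrix_inv A - matrix_inv B)"
      by (simp only: matrix_diff_ldistrib)
    also have "\<dots> = matrix_inv A ** (B - A) ** matrix_inv A ** (B - A) ** matrix_inv B"
      by (simp only: diff matrix_mul_assoc)
    finally have remainder: "matrix_inv B - matrix_inv A - - (matrix_inv A ** (B - A) ** matrix_inv A)
        = matrix_inv A ** (B - A) ** matrix_inv A ** (B - A) ** matrix_inv B" .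
    have "norm (matrix_inv A ** (B - A) ** matrix_inv A ** (B - A) ** matrix_inv B)
        \<le> a * norm (B - A) * a * norm (B - A) * norm (matrix_inv B)"
      unfolding a_def by (intro norm_matrix_mult_bound order_refl)
    also have "\<dots> \<le> a * norm (B - A) * a * norm (B - A) * (2 * a)"
      using Bi by (intro mult_left_mono) (auto simp: a_def)
    finally show ?thesis
      unfolding remainder by (simp add: power2_eq_square power3_eq_cube mult_ac)
  qed
  ultimately show ?thesis
    by (rule has_derivative_at_quadratic_remainder[OF _ \<open>d > 0\<close>])
qed

definition diag_matrix :: "('n \<Rightarrow> real) \<Rightarrow> real^'n^'n" where
  "diag_matrix c = (\<chi> i j. if i = j then c i else 0)"

lemma diag_matrix_eq:
  assumes "\<forall>i j. i \<noteq> j \<longrightarrow> M $ i $ j = 0"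
  shows "M = diag_matrix (\<lambda>i. M $ i $ i)"
  using assms by (auto simp: vec_eq_iff diag_matrix_def)

lemma diag_matrix_mult_nth: "(diag_matrix c ** A) $ i = c i *\<^sub>R A $ i"
proof -
  have "(\<Sum>k\<in>UNIV. (if i = k then c i else 0) * A $ k $ j) = c i * A $ i $ j" for j
    by (simp add: if_distrib[of "\<lambda>x. x * _"] cong: if_cong)
  then show ?thesis
    by (simp add: vec_eq_iff diag_matrix_def matrix_matrix_mult_def)
qed

lemma transpose_diag_matrix: "transpose (diag_matrix c) = diag_matrix c"
  by (simp add: vec_eq_iff diag_matrix_def transpose_def)

lemma diag_matrix_mult: "diag_matrix a ** diag_matrix b = diag_matrix (\<lambda>i. a i * b i)"
  by (simp add: vec_eq_iff diag_matrix_mult_nth) (simp add: diag_matrix_def)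

lemma diag_matrix_mult_inverse:
  assumes "\<And>i. c i \<noteq> 0"
  shows "diag_matrix c ** diag_matrix (\<lambda>i. inverse (c i)) = mat 1"
    and "diag_matrix (\<lambda>i. inverse (c i)) ** diag_matrix c = mat 1"
  using assms by (simp_all add: diag_matrix_mult) (simp_all add: diag_matrix_def mat_def vec_eq_iff)

section \<open>Positive definite matrices and their square roots\<close>

lemma pos_def_matrix_imp_invertible:
  fixes S :: "real^'r^'r"
  assumes "pos_def_matrix S"
  shows "invertible S"
proof -
  have "\<forall>x. S *v x = 0 \<longrightarrow> x = 0"
    using assms unfolding pos_def_matrix_def by (metis inner_zero_right less_irrefl)
  then show ?thesis
    using matrix_left_invertible_ker invertible_left_inverse by blast
qed

lemma pos_def_matrix_coercive:
  fixes S :: "real^'r^'r"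
  assumes "pos_def_matrix S"
  obtains \<mu> where "\<mu> > 0" "\<And>x. \<mu> * (norm x)\<^sup>2 \<le> x \<bullet> (S *v x)"
proof -
  have "continuous_on (sphere 0 1) (\<lambda>x::real^'r. x \<bullet> (S *v x))"
    by (intro continuous_intros linear_continuous_on matrix_vector_mul_bounded_linear)
  moreover have "sphere (0::real^'r) 1 \<noteq> {}"
    by simp
  ultimately obtain u where u: "u \<in> sphere 0 1"
    and min: "\<And>x. x \<in> sphere 0 1 \<Longrightarrow> u \<bullet> (S *v u) \<le> x \<bullet> (S *v x)"
    using continuous_attains_inf[OF compact_sphere] by blast
  show ?thesis
  proof (rule that)
    show "u \<bullet> (S *v u) > 0"
      using assms u unfolding pos_def_matrix_def by (metis mem_sphere_0 norm_zero zero_neq_one)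
    show "u \<bullet> (S *v u) * (norm x)\<^sup>2 \<le> x \<bullet> (S *v x)" for x
    proof (cases "x = 0")
      case False
      have "u \<bullet> (S *v u) \<le> (x /\<^sub>R norm x) \<bullet> (S *v (x /\<^sub>R norm x))"
        using False by (intro min) simp
      also have "\<dots> = x \<bullet> (S *v x) / (norm x)\<^sup>2"
        by (simp add: matrix_vector_mult_scaleR power2_eq_square divide_inverse)
      finally show ?thesis
        using False by (simp add: pos_le_divide_eq)
    qed simp
  qed
qed

lemma open_pos_def_matrix: "open {S :: real^'r^'r. pos_def_matrix S}"
  unfolding open_dist
proof (intro ballI)
  fix S0 :: "real^'r^'r"
  assume "S0 \<in> {S. pos_def_matrix S}"
  then obtain \<mu> where "\<mu> > 0" and \<mu>: "\<And>x. \<mu> * (norm x)\<^sup>2 \<le> x \<bullet> (S0 *v x)"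
    using pos_def_matrix_coercive by blast
  have "pos_def_matrix S" if "dist S S0 < \<mu>" for S
    unfolding pos_def_matrix_def
  proof (intro allI impI)
    fix x :: "real^'r"
    assume "x \<noteq> 0"
    have "\<bar>x \<bullet> ((S - S0) *v x)\<bar> \<le> norm x * (norm (S - S0) * norm x)"
      by (meson Cauchy_Schwarz_ineq2 mult_left_mono norm_ge_zero norm_matrix_vector_mult_le order_trans)
    also have "\<dots> < \<mu> * (norm x)\<^sup>2"
      using that \<open>x \<noteq> 0\<close> by (simp add: dist_norm power2_eq_square)
    finally show "x \<bullet> (S *v x) > 0"
      using \<mu>[of x] by (simp add: matrix_vector_mult_diff_rdistrib inner_diff_right)
  qed
  then show "\<exists>e>0. \<forall>S. dist S S0 < e \<longrightarrow> S \<in> {S. pos_def_matrix S}"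
    using \<open>\<mu> > 0\<close> by auto
qed

lemma pos_def_diag_matrix:
  fixes c :: "'n::finite \<Rightarrow> real"
  assumes "\<And>i. c i > 0"
  shows "pos_def_matrix (diag_matrix c)"
  unfolding pos_def_matrix_def
proof (intro allI impI)
  fix x :: "real^'n"
  assume "x \<noteq> 0"
  then obtain k where "x $ k \<noteq> 0"
    by (auto simp: vec_eq_iff)
  have "(diag_matrix c *v x) $ i = c i * x $ i" for i
    by (simp add: matrix_vector_mult_def diag_matrix_def if_distrib[of "\<lambda>t. t * _"] cong: if_cong)
  then have "x \<bullet> (diag_matrix c *v x) = (\<Sum>i\<in>UNIV. c i * (x $ i)\<^sup>2)"
    by (simp add: inner_vec_def power2_eq_square mult_ac)
  also have "\<dots> > 0"
    using assms[of k] \<open>x $ k \<noteq> 0\<close> less_imp_le[OF assms]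
    by (intro sum_pos2[where i = k] mult_nonneg_nonneg) simp_all
  finally show "x \<bullet> (diag_matrix c *v x) > 0" .
qed

lemma pos_def_matrix_congruence:
  fixes S V :: "real^'r^'r"
  assumes "pos_def_matrix S" "invertible V"
  shows "pos_def_matrix (transpose V ** S ** V)"
  unfolding pos_def_matrix_def
proof (intro allI impI)
  fix x :: "real^'r"
  assume "x \<noteq> 0"
  then have "V *v x \<noteq> 0"
    using inj_matrix_vector_mult[OF assms(2)] by (metis injD matrix_vector_mult_0_right)
  then show "x \<bullet> ((transpose V ** S ** V) *v x) > 0"
    using assms(1) unfolding pos_def_matrix_def
    by (simp add: matrix_vector_mul_assoc[symmetric] inner_transpose_matrix_vector del: transpose_matrix_vector)
qed

lemma pos_def_sylvester_zero:
  fixes S T X :: "real^'r^'r"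
  assumes S: "pos_def_matrix S" and T: "pos_def_matrix T" and eq: "S ** X + X ** T = 0"
  shows "X = 0"
proof -
  have nonneg: "v \<bullet> (M *v v) \<ge> 0" if "pos_def_matrix M" for M and v :: "real^'r"
    using that unfolding pos_def_matrix_def by (cases "v = 0") (auto intro: less_imp_le)
  have "0 = trace (transpose X ** (S ** X + X ** T))"
    by (simp add: eq trace_def)
  also have "\<dots> = trace (transpose X ** S ** X) + trace (transpose X ** (X ** T))"
    by (simp add: matrix_add_ldistrib trace_add matrix_mul_assoc)
  also have "\<dots> = trace (transpose X ** S ** transpose (transpose X)) + trace (X ** T ** transpose X)"
    by (simp add: trace_mul_sym[of "transpose X"])
  also have "\<dots> = (\<Sum>j\<in>UNIV. transpose X $ j \<bullet> (S *v transpose X $ j)) + (\<Sum>i\<in>UNIV. X $ i \<bullet> (T *v X $ i))"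
    by (simp only: trace_def quadratic_form_diagonal)
  finally have "(\<Sum>i\<in>UNIV. X $ i \<bullet> (T *v X $ i)) = 0"
    using sum_nonneg[of UNIV "\<lambda>j. transpose X $ j \<bullet> (S *v transpose X $ j)"]
      sum_nonneg[of UNIV "\<lambda>i. X $ i \<bullet> (T *v X $ i)"] nonneg[OF S] nonneg[OF T] by auto
  then have "X $ i \<bullet> (T *v X $ i) = 0" for i
    using nonneg[OF T] by (simp add: sum_nonneg_eq_0_iff)
  then have "X $ i = 0" for i
    using T unfolding pos_def_matrix_def by (metis less_irrefl)
  then show ?thesis
    by (simp add: vec_eq_iff)
qed

lemma pos_def_sqrt_unique:
  fixes S T :: "real^'r^'r"
  assumes "pos_def_matrix S" "pos_def_matrix T" "S ** S = T ** T"
  shows "S = T"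
proof -
  have "S ** (S - T) + (S - T) ** T = 0"
    by (simp add: matrix_diff_ldistrib matrix_diff_rdistrib assms(3))
  then have "S - T = 0"
    by (rule pos_def_sylvester_zero[OF assms(1,2)])
  then show ?thesis
    by simp
qed

lemma symmetric_pos_def_matrix_inv:
  fixes R :: "real^'r^'r"
  assumes sym: "transpose R = R" and pd: "pos_def_matrix R"
  shows "transpose (matrix_inv R) = matrix_inv R" and "pos_def_matrix (matrix_inv R)"
proof -
  have inv: "invertible R"
    using pd by (rule pos_def_matrix_imp_invertible)
  then show "transpose (matrix_inv R) = matrix_inv R"
    by (metis matrix_inv_transpose sym)
  show "pos_def_matrix (matrix_inv R)"
    unfolding pos_def_matrix_def
  proof (intro allI impI)
    fix x :: "real^'r"
    assume "x \<noteq> 0"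
    define y where "y = matrix_inv R *v x"
    have x: "x = R *v y"
      by (simp add: y_def matrix_vector_mul_assoc matrix_inv_right[OF inv])
    then have "y \<noteq> 0"
      using \<open>x \<noteq> 0\<close> by auto
    then have "y \<bullet> (R *v y) > 0"
      using pd unfolding pos_def_matrix_def by blast
    then show "x \<bullet> (matrix_inv R *v x) > 0"
      unfolding y_def[symmetric] by (subst x) (simp add: inner_commute)
  qed
qed

lemma mat_inv_sqrt_eq:
  fixes R :: "real^'r^'r"
  assumes sym: "transpose R = R" and pd: "pos_def_matrix R"
  shows "mat_inv_sqrt (R ** R) = matrix_inv R"
  unfolding mat_inv_sqrt_def
proof (rule the_equality)
  have inv: "invertible R"
    using pd by (rule pos_def_matrix_imp_invertible)
  have sq: "matrix_inv R ** matrix_inv R = matrix_inv (R ** R)"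
    by (rule matrix_inv_square[OF inv])
  then show "transpose (matrix_inv R) = matrix_inv R \<and> pos_def_matrix (matrix_inv R)
      \<and> matrix_inv R ** matrix_inv R = matrix_inv (R ** R)"
    using symmetric_pos_def_matrix_inv[OF sym pd] by blast
  fix S
  assume "transpose S = S \<and> pos_def_matrix S \<and> S ** S = matrix_inv (R ** R)"
  then show "S = matrix_inv R"
    using pos_def_sqrt_unique symmetric_pos_def_matrix_inv(2)[OF sym pd] sq by metis
qed

lemma matrix_square_local_inverse:
  fixes R0 :: "real^'r^'r"
  assumes pd: "pos_def_matrix R0"
  obtains U V g where "open U" "U \<subseteq> {R. pos_def_matrix R}" "R0 \<in> U" "open V" "R0 ** R0 \<in> V"
    "homeomorphism U V (\<lambda>R. R ** R) g"
proof -
  define L where "L R H = R ** H + H ** R" for R H :: "real^'r^'r"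
  have bl: "bounded_linear (L R)" for R
    unfolding L_def by (intro bounded_linear_add bounded_bilinear.bounded_linear_right
        bounded_bilinear.bounded_linear_left bounded_bilinear_matrix_matrix_mult)
  define sq' where "sq' R = Blinfun (L R)" for R
  have sq'_apply: "blinfun_apply (sq' R) = L R" for R
    by (simp add: sq'_def bounded_linear_Blinfun_apply[OF bl])
  have deriv: "((\<lambda>R. R ** R) has_derivative blinfun_apply (sq' R)) (at R)" for R
    unfolding sq'_apply L_def
    by (rule bounded_bilinear.FDERIV[OF bounded_bilinear_matrix_matrix_mult has_derivative_ident has_derivative_ident])
  have "linear sq'"
  proof (rule linearI)
    show "sq' (R + R') = sq' R + sq' R'" for R R'
      by (rule blinfun_eqI) (simp add: sq'_apply L_def plus_blinfun.rep_eq matrix_add_ldistrib matrix_add_rdistrib)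
    show "sq' (c *\<^sub>R R) = c *\<^sub>R sq' R" for c R
      by (rule blinfun_eqI) (simp add: sq'_apply L_def scaleR_blinfun.rep_eq scaleR_add_right
          bounded_bilinear.scaleR_left[OF bounded_bilinear_matrix_matrix_mult]
          bounded_bilinear.scaleR_right[OF bounded_bilinear_matrix_matrix_mult])
  qed
  then have cont: "continuous_on {R. pos_def_matrix R} sq'"
    by (simp add: linear_continuous_on linear_conv_bounded_linear)
  have "inj (L R0)"
    using pos_def_sylvester_zero[OF pd pd] linear_inj_iff_eq_0[OF bounded_linear.linear[OF bl]]
    unfolding L_def by blast
  then obtain L' where "linear L'" "L' \<circ> L R0 = id"
    using linear_injective_left_inverse bounded_linear.linear[OF bl] by blast
  then have inverse: "Blinfun L' o\<^sub>L sq' R0 = id_blinfun"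
    by (intro blinfun_eqI) (simp add: sq'_apply bounded_linear_Blinfun_apply linear_conv_bounded_linear
        pointfree_idE)
  show ?thesis
    by (rule inverse_function_theorem[OF open_pos_def_matrix deriv cont _ inverse]) (use pd that in auto)
qed

lemma symmetric_pos_def_sqrt_near:
  fixes R0 :: "real^'r^'r"
  assumes sym: "transpose R0 = R0" and pd: "pos_def_matrix R0"
  obtains W where "open W" "R0 ** R0 \<in> W"
    "\<And>A. A \<in> W \<Longrightarrow> transpose A = A \<Longrightarrow> \<exists>R. transpose R = R \<and> pos_def_matrix R \<and> R ** R = A"
proof -
  obtain U V g where U: "open U" "U \<subseteq> {R. pos_def_matrix R}" "R0 \<in> U"
    and V: "open V" "R0 ** R0 \<in> V" and hom: "homeomorphism U V (\<lambda>R. R ** R) g"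
    using matrix_square_local_inverse[OF pd] by blast
  have gsq: "\<And>R. R \<in> U \<Longrightarrow> g (R ** R) = R" and sqg: "\<And>A. A \<in> V \<Longrightarrow> g A ** g A = A"
    and gV: "g ` V = U" and gcont: "continuous_on V g"
    using hom unfolding homeomorphism_def by auto
  (* For symmetric A in W, transpose (g A) is a second square root of A in U, hence equal to g A. *)
  define W where "W = V \<inter> (\<lambda>A. transpose (g A)) -` U"
  have "open W"
    unfolding W_def using V(1) U(1)
    by (intro continuous_open_preimage linear_continuous_on_compose[OF gcont]
        bounded_linear.linear[OF bounded_linear_transpose])
  moreover have "R0 ** R0 \<in> W"
    unfolding W_def using V(2) gsq[OF U(3)] sym U(3) by simp
  moreover have "\<exists>R. transpose R = R \<and> pos_def_matrix R \<and> R ** R = A"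
    if A: "A \<in> W" "transpose A = A" for A
  proof (intro exI conjI)
    have "g A \<in> U" "transpose (g A) \<in> U"
      using A gV unfolding W_def by auto
    show sqA: "g A ** g A = A"
      using sqg A unfolding W_def by auto
    have "transpose (g A) ** transpose (g A) = A"
      by (metis sqA A(2) matrix_transpose_mul)
    then show "transpose (g A) = g A"
      using gsq[OF \<open>transpose (g A) \<in> U\<close>] by simp
    show "pos_def_matrix (g A)"
      using \<open>g A \<in> U\<close> U(2) by blast
  qed
  ultimately show ?thesis
    using that by blast
qed

section \<open>The Huber function of a square\<close>

(* H_delta (sqrt t); passing to squared row norms avoids the kink of the norm at zero rows. *)
definition huber_sq :: "real \<Rightarrow> real \<Rightarrow> real" where
  "huber_sq \<delta> t = (if \<delta>\<^sup>2 \<le> t then sqrt t - \<delta> / 2 else t / (2 * \<delta>))"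

definition huber_sq_deriv :: "real \<Rightarrow> real \<Rightarrow> real" where
  "huber_sq_deriv \<delta> t = (if \<delta>\<^sup>2 \<le> t then 1 / (2 * sqrt t) else 1 / (2 * \<delta>))"

lemma huber_eq_huber_sq:
  assumes "\<delta> > 0" "x \<ge> 0"
  shows "huber \<delta> x = huber_sq \<delta> (x\<^sup>2)"
  using assms abs_le_square_iff[of \<delta> x] by (simp add: huber_def huber_sq_def)

lemma huber_deriv_eq_huber_sq_deriv:
  assumes "\<delta> > 0" "r > 0"
  shows "huber_deriv \<delta> r / r = 2 * huber_sq_deriv \<delta> (r\<^sup>2)"
  using assms abs_le_square_iff[of \<delta> r] by (simp add: huber_deriv_def huber_sq_deriv_def)

lemma DERIV_huber_sq:
  assumes "\<delta> > 0"
  shows "(huber_sq \<delta> has_real_derivative huber_sq_deriv \<delta> t) (at t)"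
proof -
  let ?S = "{\<delta>\<^sup>2..}" and ?T = "{..<\<delta>\<^sup>2}"
  have kink: "t = \<delta>\<^sup>2" if "t \<in> closure ?S" "t \<in> closure ?T"
    using that by simp
  have "((\<lambda>t. if t \<in> ?S then sqrt t - \<delta> / 2 else t / (2 * \<delta>)) has_vector_derivative
      (if t \<in> ?S then 1 / (2 * sqrt t) else 1 / (2 * \<delta>))) (at t within UNIV)"
  proof (rule has_vector_derivative_If_within_closures[where T = ?T])
    show "t \<in> ?S \<union> ?T" "UNIV = ?S \<union> ?T"
      by auto
    show "((\<lambda>t. sqrt t - \<delta> / 2) has_vector_derivative 1 / (2 * sqrt t))
        (at t within ?S \<union> (closure ?S \<inter> closure ?T))"
      if "t \<in> ?S \<union> (closure ?S \<inter> closure ?T)"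
    proof -
      have "\<delta>\<^sup>2 \<le> t" "\<delta>\<^sup>2 > 0"
        using that assms by auto
      then have "t > 0"
        by linarith
      show ?thesis
        unfolding has_real_derivative_iff_has_vector_derivative[symmetric]
        by (rule has_field_derivative_at_within, rule DERIV_cong[OF DERIV_diff[OF DERIV_real_sqrt[OF \<open>t > 0\<close>]
            DERIV_const]]) (simp add: inverse_eq_divide)
    qed
    show "((\<lambda>t. t / (2 * \<delta>)) has_vector_derivative 1 / (2 * \<delta>))
        (at t within ?T \<union> (closure ?S \<inter> closure ?T))"
      unfolding has_real_derivative_iff_has_vector_derivative[symmetric]
      using assms by (auto intro!: derivative_eq_intros)
    show "sqrt t - \<delta> / 2 = t / (2 * \<delta>)" "1 / (2 * sqrt t) = 1 / (2 * \<delta>)"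
      if "t \<in> closure ?S" "t \<in> closure ?T"
      using kink[OF that] assms by (simp_all add: power2_eq_square)
  qed
  then show ?thesis
    unfolding has_real_derivative_iff_has_vector_derivative
    by (simp add: huber_sq_def[abs_def] huber_sq_deriv_def)
qed

section \<open>Leverage scores\<close>

definition leverage :: "real^'r^'n \<Rightarrow> 'n \<Rightarrow> real" where
  "leverage X n = X $ n \<bullet> (matrix_inv (transpose X ** X) *v X $ n)"

lemma leverage_eq_diagonal: "leverage X n = (X ** matrix_inv (transpose X ** X) ** transpose X) $ n $ n"
  by (simp add: leverage_def quadratic_form_diagonal)

lemma F_huber_eq_sum_leverage:
  fixes X :: "real^'r^'n" and R :: "real^'r^'r"
  assumes "\<delta> > 0" and sym: "transpose R = R" and pd: "pos_def_matrix R"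
    and gram: "transpose X ** X = R ** R"
  shows "F_huber \<delta> X = (\<Sum>n\<in>UNIV. huber_sq \<delta> (leverage X n) + \<delta> / 2)"
proof -
  define S where "S = matrix_inv R"
  have S: "transpose S = S" "S ** S = matrix_inv (transpose X ** X)"
    using symmetric_pos_def_matrix_inv(1)[OF sym pd] matrix_inv_square[OF pos_def_matrix_imp_invertible[OF pd]]
    by (simp_all add: S_def gram)
  have "(norm ((X ** S) $ n))\<^sup>2 = leverage X n" for n
  proof -
    have "(X ** S) $ n = S *v X $ n"
      by (metis S(1) matrix_matrix_mult_nth transpose_matrix_vector)
    then have "(norm ((X ** S) $ n))\<^sup>2 = (X $ n v* S) \<bullet> (S *v X $ n)"
      by (metis S(1) power2_norm_eq_inner transpose_matrix_vector)
    also have "\<dots> = leverage X n"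
      by (simp add: dot_lmul_matrix matrix_vector_mul_assoc S(2) leverage_def)
    finally show ?thesis .
  qed
  then have "huber \<delta> (norm ((X ** S) $ n)) = huber_sq \<delta> (leverage X n)" for n
    by (metis huber_eq_huber_sq[OF \<open>\<delta> > 0\<close> norm_ge_zero])
  moreover have "mat_inv_sqrt (transpose X ** X) = S"
    by (simp add: gram S_def mat_inv_sqrt_eq[OF sym pd])
  ultimately show ?thesis
    by (simp add: F_huber_def)
qed

lemma has_derivative_gram:
  "((\<lambda>X. transpose X ** X) has_derivative (\<lambda>H. transpose Z ** H + transpose H ** Z)) (at (Z::real^'r^'n))"
  by (rule bounded_bilinear.FDERIV[OF bounded_bilinear_matrix_matrix_mult
        bounded_linear_imp_has_derivative[OF bounded_linear_transpose] has_derivative_ident])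

lemma has_derivative_leverage:
  fixes Z :: "real^'r^'n" and n :: 'n
  assumes inv: "invertible (transpose Z ** Z)"
  defines "y \<equiv> matrix_inv (transpose Z ** Z) *v Z $ n"
  shows "((\<lambda>X. leverage X n) has_derivative (\<lambda>H. 2 * (H $ n \<bullet> y - (Z *v y) \<bullet> (H *v y)))) (at Z)"
proof -
  define Ai where "Ai = matrix_inv (transpose Z ** Z)"
  have sym: "transpose Ai = Ai"
    unfolding Ai_def by (metis inv matrix_inv_transpose matrix_transpose_mul transpose_transpose)
  have gram_inv: "((\<lambda>X. matrix_inv (transpose X ** X)) has_derivative
      (\<lambda>H. - (Ai ** (transpose Z ** H + transpose H ** Z) ** Ai))) (at Z)"
    using has_derivative_compose[OF has_derivative_gram has_derivative_matrix_inv[OF inv]] by (simp add: Ai_def)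
  have row: "((\<lambda>X. X $ n) has_derivative (\<lambda>H. H $ n)) (at Z)"
    by (rule bounded_linear_imp_has_derivative[OF bounded_linear_vec_nth])
  have "((\<lambda>X. leverage X n) has_derivative (\<lambda>H. Z $ n \<bullet> (Ai *v H $ n
      + (- (Ai ** (transpose Z ** H + transpose H ** Z) ** Ai)) *v Z $ n) + H $ n \<bullet> (Ai *v Z $ n))) (at Z)"
    unfolding leverage_def Ai_def
    by (intro has_derivative_inner row bounded_bilinear.FDERIV[OF bounded_bilinear_matrix_vector_mult
          gram_inv[unfolded Ai_def] row])
  moreover have "Z $ n \<bullet> (Ai *v H $ n + (- (Ai ** (transpose Z ** H + transpose H ** Z) ** Ai)) *v Z $ n)
      + H $ n \<bullet> (Ai *v Z $ n) = 2 * (H $ n \<bullet> y - (Z *v y) \<bullet> (H *v y))" for H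
  proof -
    have y: "Ai *v Z $ n = y"
      by (simp add: Ai_def y_def)
    have Ai_inner: "Z $ n \<bullet> (Ai *v v) = y \<bullet> v" for v
      by (metis inner_transpose_matrix_vector sym y)
    have "Z $ n \<bullet> ((Ai ** (transpose Z ** H + transpose H ** Z) ** Ai) *v Z $ n)
        = y \<bullet> (transpose Z *v (H *v y)) + y \<bullet> (transpose H *v (Z *v y))"
      by (simp only: matrix_vector_mul_assoc[symmetric] y Ai_inner matrix_vector_mult_add_rdistrib
          inner_add_right)
    also have "\<dots> = 2 * ((Z *v y) \<bullet> (H *v y))"
      by (simp only: inner_transpose_matrix_vector inner_commute[of "H *v y"] mult_2)
    finally show ?thesis
      by (simp add: inner_add_right inner_diff_right Ai_inner y inner_commute
          bounded_bilinear.minus_left[OF bounded_bilinear_matrix_vector_mult])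
  qed
  ultimately show ?thesis
    by simp
qed

lemma sum_leverage_derivative_eq_inner:
  fixes Z H :: "real^'r^'n" and A :: "real^'r^'r"
  assumes sym: "transpose A = A"
  shows "(\<Sum>n\<in>UNIV. c n * (H $ n \<bullet> (A *v Z $ n) - (Z *v (A *v Z $ n)) \<bullet> (H *v (A *v Z $ n))))
    = ((mat 1 - Z ** A ** transpose Z) ** diag_matrix c ** Z ** A) \<bullet> H"
proof -
  define P where "P = mat 1 - Z ** A ** transpose Z"
  have "transpose P = P"
    by (simp add: P_def linear_diff[OF bounded_linear.linear[OF bounded_linear_transpose]]
        matrix_transpose_mul sym matrix_mul_assoc)
  have row: "(Z ** A) $ n = A *v Z $ n" for n
    by (metis matrix_matrix_mult_nth sym transpose_matrix_vector)
  have "(P ** diag_matrix c ** Z ** A) \<bullet> H = (P ** (diag_matrix c ** (Z ** A))) \<bullet> H"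
    by (simp only: matrix_mul_assoc)
  also have "\<dots> = (diag_matrix c ** (Z ** A)) \<bullet> (P ** H)"
    by (metis inner_matrix_mult_left \<open>transpose P = P\<close>)
  also have "\<dots> = (\<Sum>n\<in>UNIV. c n * ((A *v Z $ n) \<bullet> (P ** H) $ n))"
    by (simp add: inner_vec_def[of "diag_matrix c ** (Z ** A)"] diag_matrix_mult_nth row)
  also have "\<dots> = (\<Sum>n\<in>UNIV. c n * (H $ n \<bullet> (A *v Z $ n) - (Z *v (A *v Z $ n)) \<bullet> (H *v (A *v Z $ n))))"
  proof (intro sum.cong refl arg_cong[where f = "\<lambda>t. c _ * t"])
    fix n
    let ?y = "A *v Z $ n"
    have "(Z ** A ** transpose Z ** H) $ n = ((Z ** A) $ n v* transpose Z) v* H"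
      by (simp only: matrix_matrix_mult_nth)
    also have "\<dots> = transpose H *v (Z *v ?y)"
      by (simp add: row)
    finally have "(Z ** A ** transpose Z ** H) $ n = transpose H *v (Z *v ?y)" .
    then show "?y \<bullet> (P ** H) $ n = H $ n \<bullet> ?y - (Z *v ?y) \<bullet> (H *v ?y)"
      by (simp add: P_def matrix_diff_rdistrib inner_diff_right inner_transpose_matrix_vector inner_commute
          del: transpose_matrix_vector)
  qed
  finally show ?thesis
    by (simp add: P_def)
qed

lemma has_derivative_sum_huber_sq_leverage:
  fixes Z :: "real^'r^'n"
  assumes "\<delta> > 0" and inv: "invertible (transpose Z ** Z)"
  defines "Ai \<equiv> matrix_inv (transpose Z ** Z)"
  shows "((\<lambda>X. \<Sum>n\<in>UNIV. huber_sq \<delta> (leverage X n) + \<delta> / 2) has_derivative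
    (\<lambda>H. ((mat 1 - Z ** Ai ** transpose Z) ** diag_matrix (\<lambda>n. 2 * huber_sq_deriv \<delta> (leverage Z n))
      ** Z ** Ai) \<bullet> H)) (at Z)"
proof -
  have sym: "transpose Ai = Ai"
    unfolding Ai_def by (metis inv matrix_inv_transpose matrix_transpose_mul transpose_transpose)
  have "((\<lambda>X. huber_sq \<delta> (leverage X n) + \<delta> / 2) has_derivative (\<lambda>H. huber_sq_deriv \<delta> (leverage Z n)
      * (2 * (H $ n \<bullet> (Ai *v Z $ n) - (Z *v (Ai *v Z $ n)) \<bullet> (H *v (Ai *v Z $ n)))))) (at Z)" for n
    unfolding Ai_def
    by (intro has_derivative_add_const has_derivative_compose[OF has_derivative_leverage[OF inv]
          DERIV_huber_sq[OF \<open>\<delta> > 0\<close>, unfolded has_field_derivative_def]])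
  then have "((\<lambda>X. \<Sum>n\<in>UNIV. huber_sq \<delta> (leverage X n) + \<delta> / 2) has_derivative (\<lambda>H. \<Sum>n\<in>UNIV.
      huber_sq_deriv \<delta> (leverage Z n) * (2 * (H $ n \<bullet> (Ai *v Z $ n) - (Z *v (Ai *v Z $ n)) \<bullet> (H *v (Ai *v Z $ n))))))
      (at Z)"
    by (rule has_derivative_sum)
  then show ?thesis
    by (rule has_derivative_eq_rhs) (simp add: sum_leverage_derivative_eq_inner[OF sym, symmetric] algebra_simps)
qed

lemma has_derivative_F_huber:
  fixes Z :: "real^'r^'n" and R :: "real^'r^'r"
  assumes "\<delta> > 0" and sym: "transpose R = R" and pd: "pos_def_matrix R"
    and gram: "transpose Z ** Z = R ** R"
  defines "Ai \<equiv> matrix_inv (transpose Z ** Z)"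
  shows "(F_huber \<delta> has_derivative
    (\<lambda>H. ((mat 1 - Z ** Ai ** transpose Z) ** diag_matrix (\<lambda>n. 2 * huber_sq_deriv \<delta> (leverage Z n))
      ** Z ** Ai) \<bullet> H)) (at Z)"
proof -
  obtain W where "open W" "R ** R \<in> W" and sqrt:
    "\<And>A. A \<in> W \<Longrightarrow> transpose A = A \<Longrightarrow> \<exists>S. transpose S = S \<and> pos_def_matrix S \<and> S ** S = A"
    using symmetric_pos_def_sqrt_near[OF sym pd] by blast
  define N where "N = (\<lambda>X :: real^'r^'n. transpose X ** X) -` W"
  have "open N"
    unfolding N_def
    by (rule continuous_open_vimage[OF \<open>open W\<close> has_derivative_continuous[OF has_derivative_gram]])
  moreover have "Z \<in> N"
    using \<open>R ** R \<in> W\<close> by (simp add: N_def gram)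
  moreover have "(\<Sum>n\<in>UNIV. huber_sq \<delta> (leverage X n) + \<delta> / 2) = F_huber \<delta> X" if "X \<in> N" for X
  proof -
    have "transpose X ** X \<in> W" "transpose (transpose X ** X) = transpose X ** X"
      using \<open>X \<in> N\<close> by (simp_all add: N_def matrix_transpose_mul)
    then obtain S where S: "transpose S = S" "pos_def_matrix S" "transpose X ** X = S ** S"
      using sqrt by metis
    show ?thesis
      using F_huber_eq_sum_leverage[OF \<open>\<delta> > 0\<close> S] by simp
  qed
  moreover have "invertible (transpose Z ** Z)"
    unfolding gram using invertible_mult pos_def_matrix_imp_invertible[OF pd] by blast
  ultimately show ?thesis
    unfolding Ai_def
    by (intro has_derivative_transform_within_open[OF has_derivative_sum_huber_sq_leverage[OF \<open>\<delta> > 0\<close>]])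
qed

section \<open>Compact singular value decompositions\<close>

lemma D_huber_eq_diag_matrix:
  "D_huber \<delta> W = diag_matrix (\<lambda>i. if W $ i \<noteq> 0 then huber_deriv \<delta> (norm (W $ i)) / norm (W $ i) else 0)"
  by (simp add: vec_eq_iff D_huber_def diag_matrix_def)

locale compact_svd =
  fixes U :: "real^'r^'n" and \<sigma> :: "'r \<Rightarrow> real" and V :: "real^'r^'r"
  assumes orthonormal_columns: "transpose U ** U = mat 1"
    and singular_values_pos: "\<And>i. \<sigma> i > 0"
    and orthogonal: "orthogonal_matrix V"
begin

lemma V_orthogonal: "transpose V ** V = mat 1" "V ** transpose V = mat 1"
  using orthogonal by (simp_all add: orthogonal_matrix_def)

lemma singular_values_nonzero: "\<sigma> i \<noteq> 0"
  using singular_values_pos[of i] by simp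

lemma singular_values_inverse:
  "diag_matrix \<sigma> ** diag_matrix (\<lambda>i. inverse (\<sigma> i)) = mat 1"
  "diag_matrix (\<lambda>i. inverse (\<sigma> i)) ** diag_matrix \<sigma> = mat 1"
  by (simp_all add: diag_matrix_mult_inverse singular_values_nonzero)

lemmas right_cancel = matrix_mul_right_cancel[OF orthonormal_columns] matrix_mul_right_cancel[OF V_orthogonal(2)]
  matrix_mul_right_cancel[OF singular_values_inverse(1)] matrix_mul_right_cancel[OF singular_values_inverse(2)]

lemma gram_eq_square:
  "transpose (U ** diag_matrix \<sigma> ** V) ** (U ** diag_matrix \<sigma> ** V)
    = (transpose V ** diag_matrix \<sigma> ** V) ** (transpose V ** diag_matrix \<sigma> ** V)"
  by (simp add: matrix_transpose_mul transpose_diag_matrix matrix_mul_assoc right_cancel)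

lemma gram_root_symmetric:
  "transpose (transpose V ** diag_matrix \<sigma> ** V) = transpose V ** diag_matrix \<sigma> ** V"
  by (simp add: matrix_transpose_mul transpose_diag_matrix matrix_mul_assoc)

lemma gram_root_pos_def: "pos_def_matrix (transpose V ** diag_matrix \<sigma> ** V)"
  using V_orthogonal invertible_def
  by (intro pos_def_matrix_congruence pos_def_diag_matrix singular_values_pos) blast

lemma inverse_gram:
  "matrix_inv (transpose (U ** diag_matrix \<sigma> ** V) ** (U ** diag_matrix \<sigma> ** V))
    = transpose V ** diag_matrix (\<lambda>i. inverse (\<sigma> i)) ** diag_matrix (\<lambda>i. inverse (\<sigma> i)) ** V"
  unfolding gram_eq_square by (rule matrix_inv_unique) (simp add: matrix_mul_assoc right_cancel V_orthogonal)

lemma mult_inverse_gram: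
  "(U ** diag_matrix \<sigma> ** V) ** matrix_inv (transpose (U ** diag_matrix \<sigma> ** V) ** (U ** diag_matrix \<sigma> ** V))
    = U ** diag_matrix (\<lambda>i. inverse (\<sigma> i)) ** V"
  unfolding inverse_gram by (simp add: matrix_mul_assoc right_cancel)

lemma projection_eq:
  "(U ** diag_matrix \<sigma> ** V) ** matrix_inv (transpose (U ** diag_matrix \<sigma> ** V) ** (U ** diag_matrix \<sigma> ** V))
    ** transpose (U ** diag_matrix \<sigma> ** V) = U ** transpose U"
  unfolding mult_inverse_gram by (simp add: matrix_transpose_mul transpose_diag_matrix matrix_mul_assoc right_cancel)

lemma leverage_eq: "leverage (U ** diag_matrix \<sigma> ** V) n = (norm (U $ n))\<^sup>2"
  using quadratic_form_diagonal[of U "mat 1" n]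
  by (simp add: leverage_eq_diagonal projection_eq power2_norm_eq_inner)

(* The two weights differ at zero rows of U only, where the rows of U Lambda^-1 V vanish too. *)
lemma diag_huber_sq_deriv_eq_D_huber:
  assumes "\<delta> > 0"
  shows "diag_matrix (\<lambda>n. 2 * huber_sq_deriv \<delta> ((norm (U $ n))\<^sup>2)) ** (U ** diag_matrix (\<lambda>i. inverse (\<sigma> i)) ** V)
    = D_huber \<delta> (U ** V) ** (U ** diag_matrix (\<lambda>i. inverse (\<sigma> i)) ** V)"
proof -
  have "(2 * huber_sq_deriv \<delta> ((norm (U $ n))\<^sup>2)) *\<^sub>R (U ** diag_matrix (\<lambda>i. inverse (\<sigma> i)) ** V) $ n
      = (if (U ** V) $ n \<noteq> 0 then huber_deriv \<delta> (norm ((U ** V) $ n)) / norm ((U ** V) $ n) else 0)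
        *\<^sub>R (U ** diag_matrix (\<lambda>i. inverse (\<sigma> i)) ** V) $ n" for n
  proof (cases "U $ n = 0")
    case False
    have "norm ((U ** V) $ n) = norm (U $ n)"
      by (simp add: matrix_matrix_mult_nth norm_vector_matrix_mult_orthogonal[OF orthogonal])
    with False have weight: "(if (U ** V) $ n \<noteq> 0 then huber_deriv \<delta> (norm ((U ** V) $ n)) / norm ((U ** V) $ n) else 0)
        = 2 * huber_sq_deriv \<delta> ((norm (U $ n))\<^sup>2)"
      using huber_deriv_eq_huber_sq_deriv[OF assms, of "norm (U $ n)"] by auto
    show ?thesis
      unfolding weight ..
  qed (simp add: matrix_matrix_mult_nth)
  then show ?thesis
    by (simp add: vec_eq_iff[of "_ ** (U ** _ ** V)"] diag_matrix_mult_nth D_huber_eq_diag_matrix)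
qed

end

theorem proposition4:
  fixes \<delta> :: real and Z U :: "real^'r^'n" and \<Lambda> V :: "real^'r^'r"
  assumes "\<delta> > 0"
    and "rank Z = CARD('r)"
    and "transpose U ** U = mat 1"
    and "\<forall>i j. i \<noteq> j \<longrightarrow> \<Lambda> $ i $ j = 0"
    and "\<forall>i. \<Lambda> $ i $ i > 0"
    and "orthogonal_matrix V"
    and "Z = U ** \<Lambda> ** V"
  shows "(F_huber \<delta> has_derivative
           (\<lambda>H. ((mat 1 - U ** transpose U) ** D_huber \<delta> (U ** V) ** U ** matrix_inv \<Lambda> ** V) \<bullet> H))
         (at Z)"
proof -
  define \<sigma> where "\<sigma> i = \<Lambda> $ i $ i" for i
  have \<Lambda>: "\<Lambda> = diag_matrix \<sigma>"
    unfolding \<sigma>_def using assms(4) by (rule diag_matrix_eq)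
  interpret compact_svd U \<sigma> V
    using assms(3,5,6) by unfold_locales (simp_all add: \<sigma>_def)
  have Z: "U ** diag_matrix \<sigma> ** V = Z"
    by (simp add: assms(7) \<Lambda>)
  have \<Lambda>_inv: "matrix_inv \<Lambda> = diag_matrix (\<lambda>i. inverse (\<sigma> i))"
    unfolding \<Lambda> by (rule matrix_inv_unique[OF singular_values_inverse(1)])
  let ?Ai = "matrix_inv (transpose Z ** Z)"
  have "(mat 1 - Z ** ?Ai ** transpose Z) ** diag_matrix (\<lambda>n. 2 * huber_sq_deriv \<delta> (leverage Z n)) ** Z ** ?Ai
      = (mat 1 - U ** transpose U) ** (diag_matrix (\<lambda>n. 2 * huber_sq_deriv \<delta> (leverage Z n)) ** (Z ** ?Ai))"
    by (simp only: projection_eq[unfolded Z] matrix_mul_assoc)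
  also have "\<dots> = (mat 1 - U ** transpose U) ** (D_huber \<delta> (U ** V) ** (U ** matrix_inv \<Lambda> ** V))"
    by (simp only: mult_inverse_gram[unfolded Z] leverage_eq[unfolded Z] diag_huber_sq_deriv_eq_D_huber[OF assms(1)] \<Lambda>_inv)
  finally show ?thesis
    using has_derivative_F_huber[OF assms(1) gram_root_symmetric gram_root_pos_def gram_eq_square]
    by (simp add: Z matrix_mul_assoc)
qed

end
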